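(* Let $(X,d)$ be a metric space and let $\ell:X\to[0,+\infty)$ be a lower semicontinuous function with $\inf_X\ell=0$. Then: (i) if $\lambda>0$, the equation $(\mathcal{G}_\lambda)$ has at least one solution in $\mathrm{LSC}(X)$; (ii) if $\ell$ satisfies hypothesis $(H_0)$, then $(\mathcal{G}_0)$ has at least one solution in $\mathrm{LSC}(X)$. In addition, if $X$ is complete, then $(\mathcal{G}_0)$ has a solution if and only if $\ell$ satisfies $(H_0)$.
   Context: Global slope: $G[u](x)=\sup_{y\neq x}\frac{(u(x)-u(y))_+}{d(x,y)}$ if $u(x)<+\infty$, $G[u](x)=+\infty$ otherwise. For $\lambda\ge0$, equation $(\mathcal{G}_\lambda)$: $\lambda u+G[u]=\ell$ on $X$ with $\inf_X u=0$. A solution is a lower semicontinuous $u:X\to\mathbb{R}\cup\{+\infty\}$ with $\inf_X u=0$ and $\lambda u(x)+G[u](x)=\ell(x)$ for all $x\in X$. $\mathrm{LSC}(X)$ denotes the set of real-valued lower semicontinuous functions on $X$. Hypothesis $(H_0)$: there is a sequence $\{\bar x_n\}_n\subset X$ with $\sum_{n=0}^\infty\ell(\bar x_n)d(\bar x_n,\bar x_{n+1})<+\infty$ and $\lim_{n\to\infty}\ell(\bar x_n)=0$. *)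

theory Defs
  imports "HOL-Analysis.Analysis"
begin

definition lsc :: "('a::topological_space \<Rightarrow> ereal) \<Rightarrow> bool" where
  "lsc u \<longleftrightarrow> (\<forall>c::ereal. closed {x. u x \<le> c})"

text \<open>The supremum of these nonnegative
  quantities is taken to be 0 when X has only one point.\<close>
definition gslope :: "('a::metric_space \<Rightarrow> ereal) \<Rightarrow> 'a \<Rightarrow> ereal" where
  "gslope u x = (if u x = \<infinity> then \<infinity>
     else Sup (insert 0 {max 0 (u x - u y) / ereal (dist x y) | y. y \<noteq> x}))"

definition solves_G :: "real \<Rightarrow> ('a::metric_space \<Rightarrow> real) \<Rightarrow> ('a \<Rightarrow> ereal) \<Rightarrow> bool" where
  "solves_G lam l u \<longleftrightarrow> lsc u \<and> (\<forall>x. u x \<noteq> -\<infinity>) \<and> (INF x. u x) = 0 \<and>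
     (\<forall>x. ereal lam * u x + gslope u x = ereal (l x))"

definition H0 :: "('a::metric_space \<Rightarrow> real) \<Rightarrow> bool" where
  "H0 l \<longleftrightarrow> (\<exists>xs :: nat \<Rightarrow> 'a.
     summable (\<lambda>n. l (xs n) * dist (xs n) (xs (Suc n))) \<and> (\<lambda>n. l (xs n)) \<longlonglongrightarrow> 0)"

end

theory Submission
  imports Defs
begin

(* Perron's method. Call w a subsolution if w >= 0 and lam w + G[w] <= l. The pointwise
   supremum u of a suitable class of subsolutions is again one, and it solves the equation:
   if G[u](x) < l x - lam u x, then the maximum of u and a small cone at x that is steeper
   than u there, but confined (by lower semicontinuity of l) to a ball where l stays
   positive, is a larger subsolution. For lam > 0 all subsolutions are bounded by l / lam.
   For lam = 0 one keeps only the subsolutions that become small along the sequence of (H0);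
   these are bounded along it by the tails of the series in (H0).
   Conversely, if (G0) has a solution u on a complete space, Ekeland's principle with
   epsilon = 2^-n produces points where l = G[u] <= 2^-n and whose weighted step lengths
   telescope against the values of u; they form a sequence as required by (H0). *)

lemma gslope_real:
  fixes v :: "'a::metric_space \<Rightarrow> real"
  shows "gslope (\<lambda>x. ereal (v x)) x = sup 0 (SUP y\<in>-{x}. ereal (max 0 (v x - v y) / dist x y))"
proof -
  have term_real: "max 0 (ereal (v x - v y)) / ereal (dist x y) =
      ereal (max 0 (v x - v y) / dist x y)" if "y \<noteq> x" for y
    using that by (cases "v y \<le> v x") (auto simp: max_def)
  have "{max 0 (ereal (v x) - ereal (v y)) / ereal (dist x y) |y. y \<noteq> x} =
      (\<lambda>y. ereal (max 0 (v x - v y) / dist x y)) ` (-{x})"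
    by (auto simp: term_real image_def) (metis term_real)
  then show ?thesis
    unfolding gslope_def by simp
qed

lemma gslope_nonneg: "0 \<le> gslope u x"
  unfolding gslope_def by (auto intro: Sup_upper)

lemma gslope_real_le:
  fixes v :: "'a::metric_space \<Rightarrow> real"
  assumes "0 \<le> e" and "\<And>y. v x - v y \<le> e * dist x y"
  shows "gslope (\<lambda>x. ereal (v x)) x \<le> ereal e"
  unfolding gslope_real
proof (intro sup_least SUP_least)
  fix y assume "y \<in> -{x}"
  then have "0 < dist x y" by simp
  with assms have "max 0 (v x - v y) / dist x y \<le> e"
    by (simp add: divide_le_eq)
  then show "ereal (max 0 (v x - v y) / dist x y) \<le> ereal e" by simp
qed (use assms in simp)

lemma gslope_real_eq:
  fixes v :: "'a::metric_space \<Rightarrow> real"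
  assumes "0 \<le> g" and upper: "\<And>y. v x - v y \<le> g * dist x y"
    and lower: "\<And>e. 0 < e \<Longrightarrow> e < g \<Longrightarrow> \<exists>y. y \<noteq> x \<and> (g - e) * dist x y < v x - v y"
  shows "gslope (\<lambda>x. ereal (v x)) x = ereal g"
proof -
  let ?G = "gslope (\<lambda>x. ereal (v x)) x"
  have "?G \<le> ereal g" by (rule gslope_real_le[OF assms(1) upper])
  moreover have "0 \<le> ?G" by (rule gslope_nonneg)
  ultimately obtain G where G: "?G = ereal G" "G \<le> g" "0 \<le> G"
    by (cases ?G) auto
  have close: "g - e \<le> G" if e: "0 < e" "e < g" for e
  proof -
    obtain y where "y \<noteq> x" and y: "(g - e) * dist x y < v x - v y"
      using lower[OF e] by blast
    then have "g - e \<le> max 0 (v x - v y) / dist x y"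
      by (simp add: le_divide_eq)
    also have "ereal \<dots> \<le> ?G"
      unfolding gslope_real using \<open>y \<noteq> x\<close> by (intro le_supI2 SUP_upper) auto
    finally show ?thesis using G by simp
  qed
  have "g \<le> G + e" if "0 < e" for e
    using close[OF that] \<open>0 \<le> G\<close> by (cases "e < g") auto
  then have "g \<le> G"
    by (rule field_le_epsilon)
  with G show ?thesis by simp
qed

lemma lsc_ereal_if_slope_bounded:
  fixes v :: "'a::metric_space \<Rightarrow> real"
  assumes slope: "\<And>x y. v x - v y \<le> L x * dist x y"
  shows "lsc (\<lambda>x. ereal (v x))"
  unfolding lsc_def
proof
  fix c :: ereal
  have "closed {x. v x \<le> r}" for r
    unfolding closed_sequential_limits
  proof (intro allI impI, elim conjE)
    fix s p assume "\<forall>n. s n \<in> {x. v x \<le> r}" and "s \<longlonglongrightarrow> p"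
    then have below: "v (s n) \<le> r" for n
      by simp
    from \<open>s \<longlonglongrightarrow> p\<close> have "(\<lambda>n. r + L p * dist p (s n)) \<longlonglongrightarrow> r + L p * dist p p"
      by (intro tendsto_intros)
    moreover have "v p \<le> r + L p * dist p (s n)" for n
      using slope[of p "s n"] below[of n] by simp
    ultimately show "p \<in> {x. v x \<le> r}"
      by (auto intro: LIMSEQ_le_const)
  qed
  then show "closed {x. ereal (v x) \<le> c}"
    by (cases c) auto
qed

lemma open_superlevel_if_lsc:
  fixes l :: "'a::topological_space \<Rightarrow> real"
  assumes "lsc (\<lambda>x. ereal (l x))"
  shows "open {x. m < l x}"
proof -
  have "closed {x. ereal (l x) \<le> ereal m}"
    using assms unfolding lsc_def by blast
  then show ?thesis
    by (simp add: closed_def Compl_eq not_le)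
qed

lemma closed_sublevel_add:
  fixes f g :: "'a::topological_space \<Rightarrow> real"
  assumes "\<And>c. closed {x. f x \<le> c}" and "\<And>c. closed {x. g x \<le> c}"
  shows "closed {x. f x + g x \<le> c}"
proof -
  have "{x. f x + g x \<le> c} = (\<Inter>t. {x. g x \<le> t} \<union> {x. f x \<le> c - t})"
  proof (intro equalityI subsetI)
    fix x assume "x \<in> (\<Inter>t. {x. g x \<le> t} \<union> {x. f x \<le> c - t})"
    then have "g x \<le> g x - e \<or> f x \<le> c - (g x - e)" for e
      by blast
    then have "f x \<le> c - g x + e" if "0 < e" for e
      using that by (smt (verit))
    then have "f x \<le> c - g x"
      by (rule field_le_epsilon)
    then show "x \<in> {x. f x + g x \<le> c}"
      by simp
  qed auto
  then show ?thesis
    using assms by (simp add: closed_INT closed_Un)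
qed

definition subsolution :: "real \<Rightarrow> ('a::metric_space \<Rightarrow> real) \<Rightarrow> ('a \<Rightarrow> real) \<Rightarrow> bool" where
  "subsolution lam l w \<longleftrightarrow> (\<forall>x. 0 \<le> w x) \<and> (\<forall>x. lam * w x \<le> l x) \<and>
     (\<forall>x y. w x - w y \<le> (l x - lam * w x) * dist x y)"

lemma subsolution_lsc:
  assumes "subsolution lam l w" and "0 \<le> lam"
  shows "lsc (\<lambda>x. ereal (w x))"
proof (rule lsc_ereal_if_slope_bounded)
  fix x y
  have "(l x - lam * w x) * dist x y \<le> l x * dist x y"
    using assms by (intro mult_right_mono) (auto simp: subsolution_def)
  then show "w x - w y \<le> l x * dist x y"
    using assms(1) unfolding subsolution_def by (smt (verit))
qed

lemma subsolution_SUP: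
  fixes W :: "('a::metric_space \<Rightarrow> real) set"
  assumes "W \<noteq> {}" and sub: "\<And>w. w \<in> W \<Longrightarrow> subsolution lam l w"
    and bdd: "\<And>x. bdd_above ((\<lambda>w. w x) ` W)" and "0 \<le> lam"
  shows "subsolution lam l (\<lambda>x. SUP w\<in>W. w x)"
proof -
  define u where "u x = (SUP w\<in>W. w x)" for x
  have upper: "w x \<le> u x" if "w \<in> W" for w x
    unfolding u_def using bdd that by (rule cSUP_upper2) simp
  have least: "u x \<le> c" if "\<And>w. w \<in> W \<Longrightarrow> w x \<le> c" for x c
    unfolding u_def using \<open>W \<noteq> {}\<close> that by (rule cSUP_least)
  obtain w0 where "w0 \<in> W" using \<open>W \<noteq> {}\<close> by blast
  have nonneg: "0 \<le> u x" for x
    using upper[OF \<open>w0 \<in> W\<close>, of x] sub[OF \<open>w0 \<in> W\<close>] unfolding subsolution_def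
    by (meson order_trans)
  have bound: "lam * u x \<le> l x" for x
  proof (cases "lam = 0")
    case True
    then show ?thesis using sub[OF \<open>w0 \<in> W\<close>] unfolding subsolution_def by force
  next
    case False
    with \<open>0 \<le> lam\<close> have "0 < lam" by simp
    have "u x \<le> l x / lam"
      using sub \<open>0 < lam\<close> by (intro least) (auto simp: subsolution_def le_divide_eq mult.commute)
    with \<open>0 < lam\<close> show ?thesis by (simp add: le_divide_eq mult.commute)
  qed
  have slope: "u x - u y \<le> (l x - lam * u x) * dist x y" for x y
  proof -
    have pos: "0 < 1 + lam * dist x y"
      using \<open>0 \<le> lam\<close> by (simp add: add_pos_nonneg)
    \<comment> \<open>In the form \<open>w x (1 + lam d) \<le> w y + l x d\<close> the slope condition passes to suprema.\<close>
    have "w x * (1 + lam * dist x y) \<le> u y + l x * dist x y" if "w \<in> W" for w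
    proof -
      have "w x - w y \<le> (l x - lam * w x) * dist x y"
        using sub[OF that] unfolding subsolution_def by blast
      then have "w x * (1 + lam * dist x y) \<le> w y + l x * dist x y"
        by (simp add: algebra_simps)
      also have "\<dots> \<le> u y + l x * dist x y"
        using upper[OF that] by simp
      finally show ?thesis .
    qed
    then have "u x \<le> (u y + l x * dist x y) / (1 + lam * dist x y)"
      using pos by (intro least) (simp add: le_divide_eq)
    then show ?thesis
      using pos by (simp add: le_divide_eq algebra_simps)
  qed
  show ?thesis
    unfolding subsolution_def u_def[symmetric] using nonneg bound slope by blast
qed

lemma subsolution_max:
  assumes sub: "subsolution lam l u" and "0 \<le> s"
    and psi_lipschitz: "\<And>z y. \<psi> z - \<psi> y \<le> s * dist z y"
    and psi_room: "\<And>z. u z < \<psi> z \<Longrightarrow> lam * \<psi> z + s \<le> l z"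
  shows "subsolution lam l (\<lambda>z. max (u z) (\<psi> z))"
  unfolding subsolution_def
proof (intro conjI allI)
  fix z y
  show "0 \<le> max (u z) (\<psi> z)"
    using sub unfolding subsolution_def by (simp add: le_max_iff_disj)
  show "lam * max (u z) (\<psi> z) \<le> l z"
    using sub psi_room[of z] \<open>0 \<le> s\<close> unfolding subsolution_def by (cases "\<psi> z \<le> u z") auto
  show "max (u z) (\<psi> z) - max (u y) (\<psi> y) \<le> (l z - lam * max (u z) (\<psi> z)) * dist z y"
  proof (cases "\<psi> z \<le> u z")
    case True
    then show ?thesis
      using sub unfolding subsolution_def by (smt (verit))
  next
    case False
    have "s * dist z y \<le> (l z - lam * \<psi> z) * dist z y"
      using psi_room[of z] False by (intro mult_right_mono) auto
    then show ?thesis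
      using False psi_lipschitz[of z y] by (smt (verit))
  qed
qed

lemma subsolution_max_cone:
  fixes l u :: "'a::metric_space \<Rightarrow> real"
  assumes sub: "subsolution lam l u" and "0 \<le> lam" and "k \<le> s" and "0 \<le> s"
    and flat: "\<And>y. u x - u y \<le> k * dist x y" and "\<tau> \<le> (s - k) * r"
    and near: "\<And>z. dist x z < r \<Longrightarrow> lam * (u x + \<tau>) + s \<le> l z"
  shows "subsolution lam l (\<lambda>z. max (u z) (u x + \<tau> - s * dist x z))"
    and "u z < u x + \<tau> - s * dist x z \<Longrightarrow> dist x z < r"
proof -
  define \<psi> where "\<psi> z = u x + \<tau> - s * dist x z" for z
  \<comment> \<open>The cone is steeper than \<open>u\<close> at \<open>x\<close>, so it drops below \<open>u\<close> outside the ball.\<close>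
  have local: "dist x z < r" if "u z < \<psi> z" for z
  proof (rule ccontr)
    assume "\<not> dist x z < r"
    then have "(s - k) * r \<le> (s - k) * dist x z"
      using \<open>k \<le> s\<close> by (intro mult_left_mono) auto
    with that flat[of z] \<open>\<tau> \<le> (s - k) * r\<close> show False
      unfolding \<psi>_def by (simp add: algebra_simps)
  qed
  then show "u z < u x + \<tau> - s * dist x z \<Longrightarrow> dist x z < r"
    unfolding \<psi>_def by blast
  show "subsolution lam l (\<lambda>z. max (u z) (u x + \<tau> - s * dist x z))"
    unfolding \<psi>_def[symmetric]
  proof (rule subsolution_max[OF sub \<open>0 \<le> s\<close>])
    show "\<psi> z - \<psi> y \<le> s * dist z y" for z y
      using mult_left_mono[OF dist_triangle[of x y z] \<open>0 \<le> s\<close>]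
      unfolding \<psi>_def by (simp add: algebra_simps dist_commute)
    show "lam * \<psi> z + s \<le> l z" if "u z < \<psi> z" for z
    proof -
      have "lam * \<psi> z \<le> lam * (u x + \<tau>)"
        using \<open>0 \<le> lam\<close> \<open>0 \<le> s\<close> by (intro mult_left_mono) (auto simp: \<psi>_def)
      with near[OF local[OF that]] show ?thesis
        by simp
    qed
  qed
qed

lemma subsolution_bump:
  fixes l u :: "'a::metric_space \<Rightarrow> real"
  assumes l_lsc: "lsc (\<lambda>x. ereal (l x))" and "0 \<le> lam" and sub: "subsolution lam l u"
    and "0 < e" and gap: "e < l x - lam * u x"
    and flat: "\<And>y. u x - u y \<le> (l x - lam * u x - e) * dist x y"
  obtains m w where "0 < m" and "subsolution lam l w" and "u x < w x"
    and "\<And>z. u z \<noteq> w z \<Longrightarrow> m \<le> l z"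
proof -
  define m where "m = l x - e / 4"
  have "0 \<le> lam * u x"
    using sub \<open>0 \<le> lam\<close> by (simp add: subsolution_def)
  with gap \<open>0 < e\<close> have "0 < m"
    unfolding m_def by simp
  have "open {z. m < l z}" and "m < l x"
    using open_superlevel_if_lsc[OF l_lsc] \<open>0 < e\<close> by (auto simp: m_def)
  then obtain r where "0 < r" and near: "\<And>z. dist x z < r \<Longrightarrow> m < l z"
    unfolding open_dist by (metis dist_commute mem_Collect_eq)
  define \<tau> where "\<tau> = min (e * r / 2) (e / (4 * (lam + 1)))"
  define s where "s = m - lam * (u x + \<tau>)"
  have "0 < \<tau>"
    using \<open>0 < e\<close> \<open>0 < r\<close> \<open>0 \<le> lam\<close> by (simp add: \<tau>_def)
  have "\<tau> \<le> e / (4 * (lam + 1))"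
    unfolding \<tau>_def by (rule min.cobounded2)
  then have "\<tau> * (4 * (lam + 1)) \<le> e"
    using \<open>0 \<le> lam\<close> by (subst (asm) pos_le_divide_eq) auto
  then have s_big: "(l x - lam * u x - e) + e / 2 \<le> s"
    using \<open>0 < \<tau>\<close> unfolding s_def m_def by (simp add: algebra_simps)
  have "\<tau> \<le> e * r / 2"
    unfolding \<tau>_def by (rule min.cobounded1)
  also have "\<dots> = e / 2 * r"
    by simp
  also have "\<dots> \<le> (s - (l x - lam * u x - e)) * r"
    using s_big \<open>0 < r\<close> by (intro mult_right_mono) auto
  finally have "\<tau> \<le> (s - (l x - lam * u x - e)) * r" .
  note cone = subsolution_max_cone[OF sub \<open>0 \<le> lam\<close> _ _ flat this]
  have "l x - lam * u x - e \<le> s" and "0 \<le> s"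
    using s_big gap \<open>0 < e\<close> by auto
  moreover have "lam * (u x + \<tau>) + s \<le> l z" if "dist x z < r" for z
    using near[OF that] by (simp add: s_def)
  ultimately have "subsolution lam l (\<lambda>z. max (u z) (u x + \<tau> - s * dist x z))"
    and local: "\<And>z. u z < u x + \<tau> - s * dist x z \<Longrightarrow> dist x z < r"
    using cone by blast+
  moreover have "u x < max (u x) (u x + \<tau> - s * dist x x)"
    using \<open>0 < \<tau>\<close> by simp
  moreover have "m \<le> l z" if "u z \<noteq> max (u z) (u x + \<tau> - s * dist x z)" for z
    using near[OF local, of z] that by (simp add: max_def split: if_splits)
  ultimately show ?thesis
    using that \<open>0 < m\<close> by blast
qed

lemma gslope_maximal_subsolution:
  fixes l u :: "'a::metric_space \<Rightarrow> real"
  assumes l_lsc: "lsc (\<lambda>x. ereal (l x))" and "0 \<le> lam" and sub: "subsolution lam l u"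
    and maximal: "\<And>m w. 0 < m \<Longrightarrow> subsolution lam l w \<Longrightarrow> (\<And>z. u z \<noteq> w z \<Longrightarrow> m \<le> l z)
      \<Longrightarrow> w x \<le> u x"
  shows "gslope (\<lambda>x. ereal (u x)) x = ereal (l x - lam * u x)"
proof (rule gslope_real_eq)
  show "0 \<le> l x - lam * u x" and "u x - u y \<le> (l x - lam * u x) * dist x y" for y
    using sub by (auto simp: subsolution_def)
next
  fix e assume "0 < e" and gap: "e < l x - lam * u x"
  show "\<exists>y. y \<noteq> x \<and> (l x - lam * u x - e) * dist x y < u x - u y"
  proof (rule ccontr)
    assume "\<not> ?thesis"
    then have "u x - u y \<le> (l x - lam * u x - e) * dist x y" for y
      by (cases "y = x") (auto simp: not_less)
    then obtain m w where "0 < m" "subsolution lam l w" "u x < w x" "\<And>z. u z \<noteq> w z \<Longrightarrow> m \<le> l z"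
      using subsolution_bump[OF l_lsc \<open>0 \<le> lam\<close> sub \<open>0 < e\<close> gap] by blast
    then show False
      using maximal by force
  qed
qed

lemma perron_solution:
  fixes l :: "'a::metric_space \<Rightarrow> real" and lam :: real and P :: "('a \<Rightarrow> real) \<Rightarrow> bool"
  defines "C \<equiv> {w. subsolution lam l w \<and> P w}"
  assumes l_nonneg: "\<And>x. 0 \<le> l x" and l_lsc: "lsc (\<lambda>x. ereal (l x))" and "0 \<le> lam"
    and bounded: "\<And>x. bdd_above ((\<lambda>w. w x) ` C)"
    and P_zero: "P (\<lambda>_. 0)" and P_SUP: "P (\<lambda>x. SUP w\<in>C. w x)"
    and P_local: "\<And>u w m. P u \<Longrightarrow> 0 < m \<Longrightarrow> (\<And>z. u z \<noteq> w z \<Longrightarrow> m \<le> l z) \<Longrightarrow> P w"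
    and small: "\<And>e. 0 < e \<Longrightarrow> \<exists>x. \<forall>w\<in>C. w x \<le> e"
  shows "\<exists>v. solves_G lam l (\<lambda>x. ereal (v x))"
proof -
  define u where "u x = (SUP w\<in>C. w x)" for x
  have "(\<lambda>_. 0) \<in> C"
    using l_nonneg P_zero by (simp add: C_def subsolution_def)
  then have "C \<noteq> {}" by blast
  have upper: "w x \<le> u x" if "w \<in> C" for w x
    unfolding u_def using bounded that by (rule cSUP_upper2) simp
  have sub: "subsolution lam l u"
    unfolding u_def using \<open>C \<noteq> {}\<close> bounded \<open>0 \<le> lam\<close> by (intro subsolution_SUP) (auto simp: C_def)
  have "P u"
    using P_SUP by (simp add: u_def[abs_def])
  have slope: "gslope (\<lambda>x. ereal (u x)) x = ereal (l x - lam * u x)" for x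
  proof (rule gslope_maximal_subsolution[OF l_lsc \<open>0 \<le> lam\<close> sub])
    fix m w assume "0 < m" "subsolution lam l w" "\<And>z. u z \<noteq> w z \<Longrightarrow> m \<le> l z"
    then have "w \<in> C"
      using P_local[OF \<open>P u\<close>] by (auto simp: C_def)
    then show "w x \<le> u x" by (rule upper)
  qed
  have "(INF x. ereal (u x)) = 0"
  proof (rule antisym)
    show "0 \<le> (INF x. ereal (u x))"
      using sub by (auto simp: subsolution_def intro: INF_greatest)
    show "(INF x. ereal (u x)) \<le> 0"
    proof (rule ereal_le_epsilon2)
      fix e :: real assume "0 < e"
      then obtain x where "\<forall>w\<in>C. w x \<le> e" using small by blast
      then have "u x \<le> e"
        unfolding u_def using \<open>C \<noteq> {}\<close> by (intro cSUP_least) auto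
      then show "(INF x. ereal (u x)) \<le> 0 + ereal e"
        by (intro INF_lower2) auto
    qed
  qed
  then have "solves_G lam l (\<lambda>x. ereal (u x))"
    using slope subsolution_lsc[OF sub \<open>0 \<le> lam\<close>] by (simp add: solves_G_def)
  then show ?thesis by blast
qed

lemma exists_solution_G_pos:
  fixes l :: "'a::metric_space \<Rightarrow> real"
  assumes l_nonneg: "\<And>x. 0 \<le> l x" and l_lsc: "lsc (\<lambda>x. ereal (l x))"
    and l_inf: "(INF x. l x) = 0" and "0 < lam"
  shows "\<exists>v. solves_G lam l (\<lambda>x. ereal (v x))"
proof -
  have bound: "w x \<le> l x / lam" if "subsolution lam l w" for w x
    using that \<open>0 < lam\<close> by (simp add: subsolution_def pos_le_divide_eq mult.commute)
  show ?thesis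
  proof (rule perron_solution[where P = "\<lambda>_. True"])
    show "bdd_above ((\<lambda>w. w x) ` {w. subsolution lam l w \<and> True})" for x
      by (rule bdd_aboveI2[where M = "l x / lam"]) (simp add: bound)
  next
    fix e :: real assume "0 < e"
    have "bdd_below (range l)"
      using l_nonneg by (intro bdd_belowI2[where m = 0])
    then obtain x where "l x < e * lam"
      using l_inf \<open>0 < e\<close> \<open>0 < lam\<close> cINF_less_iff[of UNIV l "e * lam"] by auto
    then have "w x \<le> e" if "subsolution lam l w" for w
      using bound[OF that, of x] \<open>l x < e * lam\<close> pos_divide_less_eq[OF \<open>0 < lam\<close>, of "l x" e]
      by linarith
    then show "\<exists>x. \<forall>w\<in>{w. subsolution lam l w \<and> True}. w x \<le> e"
      by blast
  qed (use assms in auto)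
qed

definition small_along :: "(nat \<Rightarrow> 'a) \<Rightarrow> ('a \<Rightarrow> real) \<Rightarrow> bool" where
  "small_along xs w \<longleftrightarrow> (\<forall>e>0. \<exists>\<^sub>F n in sequentially. w (xs n) < e)"

lemma small_along_if_le:
  assumes "\<And>n. w (xs n) \<le> T n" and "T \<longlonglongrightarrow> 0"
  shows "small_along xs w"
  unfolding small_along_def
proof (intro allI impI eventually_frequently)
  fix e :: real assume "0 < e"
  show "\<forall>\<^sub>F n in sequentially. w (xs n) < e"
    using order_tendstoD(2)[OF \<open>T \<longlonglongrightarrow> 0\<close> \<open>0 < e\<close>]
    by eventually_elim (use assms(1) in \<open>rule le_less_trans\<close>)
qed simp

lemma small_along_local:
  fixes l :: "'a \<Rightarrow> real"
  assumes "small_along xs u" and "(\<lambda>n. l (xs n)) \<longlonglongrightarrow> 0" and "0 < m"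
    and differ: "\<And>z. u z \<noteq> w z \<Longrightarrow> m \<le> l z"
  shows "small_along xs w"
proof -
  have "\<forall>\<^sub>F n in sequentially. u (xs n) = w (xs n)"
    using order_tendstoD(2)[OF assms(2) \<open>0 < m\<close>] by eventually_elim (use differ in force)
  with \<open>small_along xs u\<close> show ?thesis
    unfolding small_along_def by (auto cong: frequently_cong)
qed

lemma subsolution0_le_tail:
  fixes l w :: "'a::metric_space \<Rightarrow> real" and xs :: "nat \<Rightarrow> 'a"
  defines "a \<equiv> \<lambda>k. l (xs k) * dist (xs k) (xs (Suc k))"
  assumes l_nonneg: "\<And>x. 0 \<le> l x" and "summable a" and sub: "subsolution 0 l w"
    and "small_along xs w"
  shows "w (xs n) \<le> (\<Sum>k. a k) - (\<Sum>k<n. a k)"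
proof (rule field_le_epsilon)
  fix e :: real assume "0 < e"
  then obtain N where "n \<le> N" and "w (xs N) < e"
    using \<open>small_along xs w\<close> unfolding small_along_def frequently_sequentially by blast
  have "w (xs n) \<le> w (xs N) + ((\<Sum>k<N. a k) - (\<Sum>k<n. a k))"
    using \<open>n \<le> N\<close>
  proof (induction N rule: dec_induct)
    case (step N)
    have "w (xs N) - w (xs (Suc N)) \<le> a N"
      using sub unfolding subsolution_def a_def by simp
    with step.IH show ?case by simp
  qed simp
  also have "(\<Sum>k<N. a k) \<le> (\<Sum>k. a k)"
    using \<open>summable a\<close> l_nonneg by (intro sum_le_suminf) (auto simp: a_def)
  finally show "w (xs n) \<le> (\<Sum>k. a k) - (\<Sum>k<n. a k) + e"
    using \<open>w (xs N) < e\<close> by simp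
qed

lemma exists_solution_G0_if_H0:
  fixes l :: "'a::metric_space \<Rightarrow> real"
  assumes l_nonneg: "\<And>x. 0 \<le> l x" and l_lsc: "lsc (\<lambda>x. ereal (l x))" and "H0 l"
  shows "\<exists>v. solves_G 0 l (\<lambda>x. ereal (v x))"
proof -
  obtain xs :: "nat \<Rightarrow> 'a" where summable: "summable (\<lambda>k. l (xs k) * dist (xs k) (xs (Suc k)))"
    and l_xs: "(\<lambda>n. l (xs n)) \<longlonglongrightarrow> 0"
    using \<open>H0 l\<close> unfolding H0_def by blast
  define T where "T n = (\<Sum>k. l (xs k) * dist (xs k) (xs (Suc k))) -
    (\<Sum>k<n. l (xs k) * dist (xs k) (xs (Suc k)))" for n
  define C where "C = {w. subsolution 0 l w \<and> small_along xs w}"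
  have "T \<longlonglongrightarrow> (\<Sum>k. l (xs k) * dist (xs k) (xs (Suc k))) - (\<Sum>k. l (xs k) * dist (xs k) (xs (Suc k)))"
    unfolding T_def by (intro tendsto_intros summable_LIMSEQ summable)
  then have "T \<longlonglongrightarrow> 0"
    by simp
  have tail: "w (xs n) \<le> T n" if "w \<in> C" for w n
    using that subsolution0_le_tail[OF l_nonneg summable] unfolding C_def T_def by blast
  show ?thesis
  proof (rule perron_solution[where P = "small_along xs"], fold C_def)
    show "bdd_above ((\<lambda>w. w x) ` C)" for x
    proof (rule bdd_aboveI2)
      fix w assume "w \<in> C"
      then have "w x - w (xs 0) \<le> l x * dist x (xs 0)"
        by (simp add: C_def subsolution_def)
      then show "w x \<le> T 0 + l x * dist x (xs 0)"
        using tail[OF \<open>w \<in> C\<close>, of 0] by simp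
    qed
  next
    have "(\<lambda>_. 0) \<in> C"
      using l_nonneg by (simp add: C_def small_along_def subsolution_def)
    then have "(SUP w\<in>C. w (xs n)) \<le> T n" for n
      by (intro cSUP_least tail) auto
    then show "small_along xs (\<lambda>x. SUP w\<in>C. w x)"
      using \<open>T \<longlonglongrightarrow> 0\<close> by (rule small_along_if_le)
  next
    fix u w :: "'a \<Rightarrow> real" and m :: real
    assume "small_along xs u" and "0 < m" and "\<And>z. u z \<noteq> w z \<Longrightarrow> m \<le> l z"
    then show "small_along xs w"
      using small_along_local[of xs u l m w] l_xs by blast
  next
    fix e :: real assume "0 < e"
    then obtain n where "T n < e"
      using order_tendstoD(2)[OF \<open>T \<longlonglongrightarrow> 0\<close>] eventually_happens'[OF sequentially_bot] by blast
    then show "\<exists>x. \<forall>w\<in>C. w x \<le> e"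
      using tail by (meson less_imp_le order_trans)
  qed (use assms in \<open>auto simp: small_along_def\<close>)
qed

definition descent_set :: "('a::metric_space \<Rightarrow> real) \<Rightarrow> real \<Rightarrow> 'a \<Rightarrow> 'a set" where
  "descent_set f e x = {y. f y + e * dist x y \<le> f x}"

lemma descent_set_refl: "x \<in> descent_set f e x"
  by (simp add: descent_set_def)

lemma descent_set_trans:
  assumes "0 \<le> e" and "y \<in> descent_set f e x"
  shows "descent_set f e y \<subseteq> descent_set f e x"
proof
  fix q assume "q \<in> descent_set f e y"
  moreover have "e * dist x q \<le> e * dist x y + e * dist y q"
    using mult_left_mono[OF dist_triangle[of x q y] \<open>0 \<le> e\<close>] by (simp add: distrib_left)
  ultimately show "q \<in> descent_set f e x"
    using assms(2) by (simp add: descent_set_def)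
qed

lemma closed_descent_set:
  fixes f :: "'a::metric_space \<Rightarrow> real"
  assumes "\<And>c. closed {x. f x \<le> c}"
  shows "closed (descent_set f e x)"
  unfolding descent_set_def
  by (intro closed_sublevel_add[OF assms] closed_Collect_le continuous_intros)

lemma descent_sets_shrinking:
  fixes f :: "'a::metric_space \<Rightarrow> real"
  assumes "bdd_below (range f)" and "0 \<le> e"
  obtains s where "s 0 = z" and "decseq (\<lambda>n. descent_set f e (s n))"
    and "\<And>n y. y \<in> descent_set f e (s (Suc n)) \<Longrightarrow> e * dist (s (Suc n)) y \<le> inverse (Suc n)"
proof -
  let ?S = "descent_set f e" and ?\<delta> = "\<lambda>n. inverse (real (Suc n))"
  have step: "\<exists>y. y \<in> ?S x \<and> f y < Inf (f ` ?S x) + ?\<delta> n" for x n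
  proof -
    have "Inf (f ` ?S x) < Inf (f ` ?S x) + ?\<delta> n"
      by simp
    then show ?thesis
      using cInf_lessD[of "f ` ?S x"] descent_set_refl by blast
  qed
  \<comment> \<open>Choosing each point almost minimal for \<open>f\<close> on the previous set is what makes the sets shrink.\<close>
  have "\<exists>s. \<forall>n. (n = 0 \<longrightarrow> s n = z) \<and>
      s (Suc n) \<in> ?S (s n) \<and> f (s (Suc n)) < Inf (f ` ?S (s n)) + ?\<delta> n"
    by (rule dependent_nat_choice) (use step in auto)
  then obtain s where "s 0 = z" and s_in: "\<And>n. s (Suc n) \<in> ?S (s n)"
    and s_near_inf: "\<And>n. f (s (Suc n)) < Inf (f ` ?S (s n)) + ?\<delta> n"
    by blast
  have "decseq (\<lambda>n. ?S (s n))"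
    using descent_set_trans[OF \<open>0 \<le> e\<close> s_in] by (intro decseq_SucI) blast
  moreover have "e * dist (s (Suc n)) y \<le> ?\<delta> n" if "y \<in> ?S (s (Suc n))" for n y
  proof -
    have "y \<in> ?S (s n)"
      using descent_set_trans[OF \<open>0 \<le> e\<close> s_in] that by blast
    then have "Inf (f ` ?S (s n)) \<le> f y"
      using \<open>bdd_below (range f)\<close> by (intro cInf_lower) (auto intro: bdd_below_mono)
    with that s_near_inf[of n] show ?thesis
      by (simp add: descent_set_def)
  qed
  ultimately show ?thesis
    using that \<open>s 0 = z\<close> by blast
qed

lemma descent_sets_common_point:
  fixes f :: "'a::metric_space \<Rightarrow> real"
  assumes "complete (UNIV :: 'a set)" and "bdd_below (range f)"
    and f_lsc: "\<And>c. closed {x. f x \<le> c}" and "0 < e"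
  obtains s p where "s 0 = z" and "\<And>n. p \<in> descent_set f e (s n)"
    and "\<And>n y. y \<in> descent_set f e (s (Suc n)) \<Longrightarrow> e * dist (s (Suc n)) y \<le> inverse (Suc n)"
proof -
  let ?S = "descent_set f e"
  obtain s where "s 0 = z" and "decseq (\<lambda>n. ?S (s n))"
    and shrinking: "\<And>n y. y \<in> ?S (s (Suc n)) \<Longrightarrow> e * dist (s (Suc n)) y \<le> inverse (Suc n)"
    using descent_sets_shrinking \<open>bdd_below (range f)\<close> \<open>0 < e\<close> by (metis less_imp_le)
  have "\<Inter> (range (\<lambda>n. ?S (s n))) \<noteq> {}"
  proof (intro Met_TC.mcomplete_nest[THEN iffD1, rule_format] conjI allI impI)
    show "Met_TC.mcomplete TYPE('a)"
      using \<open>complete UNIV\<close> by simp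
    show "closedin Met_TC.mtopology (?S (s n))" for n
      using closed_descent_set[OF f_lsc] by simp
    show "?S (s n) \<noteq> {}" for n
      using descent_set_refl[of "s n" f e] by blast
    show "decseq (\<lambda>n. ?S (s n))" by fact
  next
    fix \<epsilon> :: real assume "0 < \<epsilon>"
    then obtain n where n: "inverse (Suc n) < e * \<epsilon>"
      using reals_Archimedean[of "e * \<epsilon>"] \<open>0 < e\<close> by auto
    have "?S (s (Suc n)) \<subseteq> cball (s (Suc n)) \<epsilon>"
    proof
      fix y assume "y \<in> ?S (s (Suc n))"
      then have "e * dist (s (Suc n)) y < e * \<epsilon>"
        using shrinking n by (meson le_less_trans)
      with \<open>0 < e\<close> show "y \<in> cball (s (Suc n)) \<epsilon>"
        by simp
    qed
    then show "\<exists>n a. ?S (s n) \<subseteq> Met_TC.mcball a \<epsilon>"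
      by auto
  qed
  then show ?thesis
    using that \<open>s 0 = z\<close> shrinking by blast
qed

lemma ekeland_variational_principle:
  fixes f :: "'a::metric_space \<Rightarrow> real"
  assumes "complete (UNIV :: 'a set)" and "bdd_below (range f)"
    and "\<And>c. closed {x. f x \<le> c}" and "0 < e"
  obtains p where "f p + e * dist z p \<le> f z" and "\<And>y. f p \<le> f y + e * dist p y"
proof -
  let ?S = "descent_set f e"
  obtain s p where "s 0 = z" and p: "\<And>n. p \<in> ?S (s n)"
    and shrinking: "\<And>n y. y \<in> ?S (s (Suc n)) \<Longrightarrow> e * dist (s (Suc n)) y \<le> inverse (Suc n)"
    using descent_sets_common_point[OF assms] by blast
  have "f p \<le> f y + e * dist p y" for y
  proof (rule ccontr)
    assume "\<not> ?thesis"
    then have "y \<in> ?S p" and "y \<noteq> p"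
      by (auto simp: descent_set_def)
    then have y_in: "y \<in> ?S (s n)" for n
      using descent_set_trans[OF _ p] \<open>0 < e\<close> by fastforce
    have "e * dist p y \<le> 2 * inverse (Suc n)" for n
    proof -
      have "e * dist p y \<le> e * dist (s (Suc n)) p + e * dist (s (Suc n)) y"
        using dist_triangle3[of p y "s (Suc n)"] \<open>0 < e\<close> by (simp add: distrib_left[symmetric])
      also have "\<dots> \<le> 2 * inverse (Suc n)"
        using shrinking[OF p, of n] shrinking[OF y_in, of n] by simp
      finally show ?thesis .
    qed
    moreover have "(\<lambda>n. 2 * inverse (real (Suc n))) \<longlonglongrightarrow> 0"
      by (rule tendsto_mult_right_zero[OF LIMSEQ_inverse_real_of_nat])
    ultimately have "e * dist p y \<le> 0"
      by (blast intro: LIMSEQ_le_const)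
    with \<open>0 < e\<close> \<open>y \<noteq> p\<close> show False
      by (simp add: mult_le_0_iff)
  qed
  moreover have "f p + e * dist z p \<le> f z"
    using p[of 0] by (simp add: \<open>s 0 = z\<close> descent_set_def)
  ultimately show ?thesis
    using that by blast
qed

lemma ekeland_descent_sequence:
  fixes f :: "'a::metric_space \<Rightarrow> real"
  assumes "complete (UNIV :: 'a set)" and "bdd_below (range f)"
    and "\<And>c. closed {x. f x \<le> c}" and \<delta>_pos: "\<And>n. 0 < \<delta> n"
  obtains y where "\<And>n. f (y (Suc n)) + \<delta> n * dist (y n) (y (Suc n)) \<le> f (y n)"
    and "\<And>n. gslope (\<lambda>x. ereal (f x)) (y (Suc n)) \<le> ereal (\<delta> n)"
proof -
  have step: "\<exists>y. f y + \<delta> n * dist x y \<le> f x \<and> gslope (\<lambda>x. ereal (f x)) y \<le> ereal (\<delta> n)"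
    for x n
  proof -
    obtain y where "f y + \<delta> n * dist x y \<le> f x" and "\<And>z. f y \<le> f z + \<delta> n * dist y z"
      using ekeland_variational_principle[OF assms(1-3) \<delta>_pos] by blast
    moreover have "gslope (\<lambda>x. ereal (f x)) y \<le> ereal (\<delta> n)"
      using calculation(2) \<delta>_pos[of n] by (intro gslope_real_le) (auto simp: algebra_simps less_imp_le)
    ultimately show ?thesis
      by blast
  qed
  have "\<exists>y. \<forall>n. True \<and> f (y (Suc n)) + \<delta> n * dist (y n) (y (Suc n)) \<le> f (y n) \<and>
      gslope (\<lambda>x. ereal (f x)) (y (Suc n)) \<le> ereal (\<delta> n)"
    by (intro dependent_nat_choice) (use step in auto)
  then show ?thesis
    using that by blast
qed

lemma summable_if_le_telescoping:
  fixes a g :: "nat \<Rightarrow> real"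
  assumes "\<And>n. 0 \<le> a n" and "\<And>n. a n \<le> g n - g (Suc n)" and "\<And>n. 0 \<le> g n"
  shows "summable a"
proof (rule summableI_nonneg_bounded)
  show "sum a {..<n} \<le> g 0" for n
  proof -
    have "sum a {..<n} \<le> (\<Sum>k<n. g k - g (Suc k))"
      by (intro sum_mono assms(2))
    also have "\<dots> = g 0 - g n"
      by (rule sum_lessThan_telescope')
    finally show ?thesis
      using assms(3)[of n] by simp
  qed
qed (use assms in auto)

lemma H0_if_gslope_eq:
  fixes f l :: "'a::metric_space \<Rightarrow> real"
  assumes "complete (UNIV :: 'a set)" and f_nonneg: "\<And>x. 0 \<le> f x"
    and f_lsc: "\<And>c. closed {x. f x \<le> c}"
    and slope: "\<And>x. gslope (\<lambda>x. ereal (f x)) x = ereal (l x)"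
  shows "H0 l"
proof -
  have l_nonneg: "0 \<le> l x" for x
    using gslope_nonneg[of "\<lambda>x. ereal (f x)" x] slope[of x] by simp
  have "bdd_below (range f)"
    using f_nonneg by (intro bdd_belowI2[where m = 0])
  define \<delta> :: "nat \<Rightarrow> real" where "\<delta> n = (1 / 2) ^ n" for n
  obtain y where descent: "\<And>n. f (y (Suc n)) + \<delta> n * dist (y n) (y (Suc n)) \<le> f (y n)"
    and "\<And>n. gslope (\<lambda>x. ereal (f x)) (y (Suc n)) \<le> ereal (\<delta> n)"
    using ekeland_descent_sequence[OF \<open>complete UNIV\<close> \<open>bdd_below (range f)\<close> f_lsc, of \<delta>]
    by (auto simp: \<delta>_def)
  then have l_small: "l (y (Suc n)) \<le> \<delta> n" for n
    using slope by simp
  define xs where "xs n = y (Suc n)" for n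
  \<comment> \<open>The factor \<open>\<delta> n = 2 \<delta> (Suc n)\<close> makes the weighted steps telescope against the values of \<open>f\<close>.\<close>
  have telescoping: "l (xs n) * dist (xs n) (xs (Suc n)) \<le> 2 * f (xs n) - 2 * f (xs (Suc n))" for n
  proof -
    have "l (xs n) * dist (xs n) (xs (Suc n)) \<le> \<delta> n * dist (xs n) (xs (Suc n))"
      unfolding xs_def using l_small by (intro mult_right_mono) auto
    also have "\<dots> = 2 * (\<delta> (Suc n) * dist (y (Suc n)) (y (Suc (Suc n))))"
      by (simp add: \<delta>_def xs_def)
    also have "\<dots> \<le> 2 * f (xs n) - 2 * f (xs (Suc n))"
      using descent[of "Suc n"] by (simp add: xs_def)
    finally show ?thesis .
  qed
  have "summable (\<lambda>n. l (xs n) * dist (xs n) (xs (Suc n)))"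
    using l_nonneg f_nonneg
    by (intro summable_if_le_telescoping[where g = "\<lambda>n. 2 * f (xs n)"] telescoping) simp_all
  moreover have "(\<lambda>n. l (xs n)) \<longlonglongrightarrow> 0"
  proof (rule tendsto_sandwich[of "\<lambda>_. 0" _ _ \<delta>])
    show "\<delta> \<longlonglongrightarrow> 0"
      unfolding \<delta>_def[abs_def] by (rule LIMSEQ_power_zero) simp
  qed (auto simp: xs_def l_nonneg l_small)
  ultimately show ?thesis
    unfolding H0_def by blast
qed

lemma H0_if_solves_G0:
  fixes l :: "'a::metric_space \<Rightarrow> real"
  assumes "complete (UNIV :: 'a set)" and "solves_G 0 l u"
  shows "H0 l"
proof -
  have slope: "gslope u x = ereal (l x)" for x
    using \<open>solves_G 0 l u\<close> by (simp add: solves_G_def zero_ereal_def[symmetric])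
  have "u x \<noteq> \<infinity>" "u x \<noteq> -\<infinity>" for x
    using slope[of x] \<open>solves_G 0 l u\<close> by (auto simp: gslope_def solves_G_def)
  then have "ereal (real_of_ereal (u x)) = u x" for x
    by (cases "u x") auto
  then have u_real: "u = (\<lambda>x. ereal (real_of_ereal (u x)))"
    by simp
  show ?thesis
  proof (rule H0_if_gslope_eq[OF \<open>complete UNIV\<close>, where f = "\<lambda>x. real_of_ereal (u x)"])
    have "(INF x. u x) \<le> u x" for x
      by (rule INF_lower) simp
    then show "0 \<le> real_of_ereal (u x)" for x
      using \<open>solves_G 0 l u\<close> by (simp add: solves_G_def real_of_ereal_pos)
    have "closed {x. u x \<le> ereal c}" for c
      using \<open>solves_G 0 l u\<close> by (simp add: solves_G_def lsc_def)
    then show "closed {x. real_of_ereal (u x) \<le> c}" for c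
      by (subst (asm) u_real) simp
    show "gslope (\<lambda>x. ereal (real_of_ereal (u x))) x = ereal (l x)" for x
      using slope by (simp flip: u_real)
  qed
qed

theorem corollary3p8:
  fixes l :: "'a::metric_space \<Rightarrow> real"
  assumes l_nonneg: "\<And>x. l x \<ge> 0"
    and l_lsc: "lsc (\<lambda>x. ereal (l x))"
    and l_inf: "(INF x. l x) = 0"
  shows "(\<forall>lam>0. \<exists>v :: 'a \<Rightarrow> real. solves_G lam l (\<lambda>x. ereal (v x)))
    \<and> (H0 l \<longrightarrow> (\<exists>v :: 'a \<Rightarrow> real. solves_G 0 l (\<lambda>x. ereal (v x))))
    \<and> (complete (UNIV :: 'a set) \<longrightarrow> ((\<exists>u. solves_G 0 l u) \<longleftrightarrow> H0 l))"
  using exists_solution_G_pos[OF l_nonneg l_lsc l_inf] exists_solution_G0_if_H0[OF l_nonneg l_lsc]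
    H0_if_solves_G0
  by blast

end
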